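(* Consider an instance of the Side-Access Compact Retrieval Problem, a feasible solution, a cycle $c$ of it, and the set $Y$ of targets retrieved in cycle $c$. List the distinct heights $\{h_c(b):b\in Y\}$ in increasing order as $h_1<\dots<h_p$ and let $s_i=\max\{s(b): b\in Y,\ h_c(b)=h_i\}$. Then there exists an index $\ell\in\{1,\dots,p\}$ such that $s_1\le s_2\le\dots\le s_\ell\ge s_{\ell+1}\ge\dots\ge s_p$.
   Context: A slice is a sequence of stacks $T=(1,\dots,m)$, indexed from the entry side (stack $1$) outward; "left" means smaller index. Stack $t$ initially consists of $h(t)\ge0$ unit loads (ULs) stacked without gaps; a UL at height $k$ has exactly $k$ ULs below it in its stack. A pick-list $\mathcal B$ of target ULs is given; target $b$ lies in stack $s(b)$ at initial height $h(b)$. Retrieval proceeds in cycles $c=1,2,\dots$; $h_c(t)$, $h_c(b)$ are the heights of stack $t$ and of a not-yet-retrieved target $b$ at the start of cycle $c$ ($h_1=h$). In cycle $c$ one chooses clearance levels $\ell_c(t)\in\{0,\dots,h_c(t)\}$: the top $e_c(t)=h_c(t)-\ell_c(t)$ ULs of stack $t$ are lifted for the whole cycle. Then a sequence $(b_{c,1},\dots,b_{c,k})$ of targets is retrieved, with residual heights $d_{c,0}=\ell_c$ and $d_{c,i}(t)=d_{c,i-1}(t)-1$ if $t=s(b_{c,i})$, else unchanged. Retrieving $b$ (stack $t$, height $h=h_c(b)$) as the $i$-th retrieval requires accessibility: (a) $d_{c,i-1}(t)=h+1$ and (b) $d_{c,i-1}(t')=h$ for all $t'<t$. Afterwards lifted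 ULs are lowered, $h_{c+1}(t)=d_{c,k}(t)+e_c(t)$, and each remaining target's height decreases by the number of targets retrieved in cycle $c$ below it in its stack. Non-targets are never removed. A solution is feasible if every target is retrieved exactly once and is accessible when retrieved. *)

theory Defs
  imports Main
begin

text \<open>Stacks are numbered 1..m (stack 1 at the entry side).
  Targets are elements of a finite set B of some type 'b;
  s b is the stack of target b and hb b its initial height.
  A state at the start of a cycle is a triple (H, TH, R): stack heights H,
  current target heights TH, and set R of already retrieved targets.
  A cycle is a pair (lv, bs) of clearance levels lv and the retrieval sequence bs.\<close>

type_synonym 'b state = "(nat \<Rightarrow> nat) \<times> ('b \<Rightarrow> nat) \<times> 'b set"
type_synonym 'b cycle = "(nat \<Rightarrow> nat) \<times> 'b list"

definition valid_instance ::
  "nat \<Rightarrow> (nat \<Rightarrow> nat) \<Rightarrow> 'b set \<Rightarrow> ('b \<Rightarrow> nat) \<Rightarrow> ('b \<Rightarrow> nat) \<Rightarrow> bool" where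
  "valid_instance m h0 B s hb \<longleftrightarrow>
     finite B \<and>
     (\<forall>b\<in>B. s b \<in> {1..m} \<and> hb b < h0 (s b)) \<and>
     inj_on (\<lambda>b. (s b, hb b)) B"

text \<open>Residual heights d_{c,i} after retrieving the list xs in a cycle with
  clearance levels lv.\<close>
definition resid :: "(nat \<Rightarrow> nat) \<Rightarrow> ('b \<Rightarrow> nat) \<Rightarrow> 'b list \<Rightarrow> nat \<Rightarrow> nat" where
  "resid lv s xs t = lv t - length (filter (\<lambda>b. s b = t) xs)"

definition accessible ::
  "nat \<Rightarrow> ('b \<Rightarrow> nat) \<Rightarrow> ('b \<Rightarrow> nat) \<Rightarrow> (nat \<Rightarrow> nat) \<Rightarrow> 'b \<Rightarrow> bool" where
  "accessible m s TH d b \<longleftrightarrow>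
     d (s b) = TH b + 1 \<and> (\<forall>t'\<in>{1..<s b}. d t' = TH b)"

definition cycle_ok ::
  "nat \<Rightarrow> 'b set \<Rightarrow> ('b \<Rightarrow> nat) \<Rightarrow> 'b state \<Rightarrow> 'b cycle \<Rightarrow> bool" where
  "cycle_ok m B s st cy \<longleftrightarrow>
     (case st of (H, TH, R) \<Rightarrow> case cy of (lv, bs) \<Rightarrow>
        (\<forall>t\<in>{1..m}. lv t \<le> H t) \<and>
        distinct bs \<and> set bs \<subseteq> B - R \<and>
        (\<forall>i<length bs. accessible m s TH (resid lv s (take i bs)) (bs ! i)))"

definition next_state ::
  "('b \<Rightarrow> nat) \<Rightarrow> 'b state \<Rightarrow> 'b cycle \<Rightarrow> 'b state" where
  "next_state s st cy =
     (case st of (H, TH, R) \<Rightarrow> case cy of (lv, bs) \<Rightarrow>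
        ((\<lambda>t. resid lv s bs t + (H t - lv t)),
         (\<lambda>b. TH b - length (filter (\<lambda>b'. s b' = s b \<and> TH b' < TH b) bs)),
         R \<union> set bs))"

text \<open>state_at h0 hb s cs c = state at the start of cycle c+1 (0-indexed c).\<close>
fun state_at ::
  "(nat \<Rightarrow> nat) \<Rightarrow> ('b \<Rightarrow> nat) \<Rightarrow> ('b \<Rightarrow> nat) \<Rightarrow> 'b cycle list \<Rightarrow> nat \<Rightarrow> 'b state" where
  "state_at h0 hb s cs 0 = (h0, hb, {})"
| "state_at h0 hb s cs (Suc c) = next_state s (state_at h0 hb s cs c) (cs ! c)"

definition feasible ::
  "nat \<Rightarrow> (nat \<Rightarrow> nat) \<Rightarrow> 'b set \<Rightarrow> ('b \<Rightarrow> nat) \<Rightarrow> ('b \<Rightarrow> nat) \<Rightarrow> 'b cycle list \<Rightarrow> bool" where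
  "feasible m h0 B s hb cs \<longleftrightarrow>
     (\<forall>c<length cs. cycle_ok m B s (state_at h0 hb s cs c) (cs ! c)) \<and>
     snd (snd (state_at h0 hb s cs (length cs))) = B"

end

theory Submission
  imports Defs
begin

text \<open>Suppose the maximal stacks per height had a valley: heights \<open>h\<^sub>i < h\<^sub>j < h\<^sub>k\<close> with
  \<open>s\<^sub>j < min s\<^sub>i s\<^sub>k\<close>. Pick targets \<open>a\<close>, \<open>e\<close> realising \<open>s\<^sub>i\<close>, \<open>s\<^sub>k\<close> and let
  \<open>u = min (s a) (s e)\<close>. Accessibility pins the residual height of stack \<open>u\<close> to
  \<open>h\<^sub>i\<close> or \<open>h\<^sub>i + 1\<close> when \<open>a\<close> is retrieved and to \<open>h\<^sub>k\<close> or \<open>h\<^sub>k + 1\<close> when \<open>e\<close> is retrieved.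
  Residual heights only decrease, one unit per retrieval from that stack, so \<open>e\<close> comes
  first and in between some retrieval lowers stack \<open>u\<close> from \<open>h\<^sub>j + 1\<close> to \<open>h\<^sub>j\<close>. That target
  lies in stack \<open>u\<close> at height \<open>h\<^sub>j\<close>, whence \<open>u \<le> s\<^sub>j\<close>, a contradiction. A sequence
  without valleys is unimodal around any position of its maximum.\<close>

lemma unimodal_if_no_valley:
  fixes S :: "nat \<Rightarrow> 'a::linorder"
  assumes "1 \<le> p"
    and no_valley: "\<And>i j k. 1 \<le> i \<Longrightarrow> i < j \<Longrightarrow> j < k \<Longrightarrow> k \<le> p \<Longrightarrow> min (S i) (S k) \<le> S j"
  shows "\<exists>l\<in>{1..p}. (\<forall>i j. 1 \<le> i \<and> i \<le> j \<and> j \<le> l \<longrightarrow> S i \<le> S j) \<and>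
                   (\<forall>i j. l \<le> i \<and> i \<le> j \<and> j \<le> p \<longrightarrow> S j \<le> S i)"
proof -
  obtain l where l: "l \<in> {1..p}" and max: "Max (S ` {1..p}) = S l"
    using obtains_MAX[of "{1..p}"] \<open>1 \<le> p\<close> by auto
  have le_max: "S i \<le> S l" if "i \<in> {1..p}" for i
    using that max by (metis Max_ge finite_atLeastAtMost finite_imageI imageI)
  have "S i \<le> S j" if "1 \<le> i" "i \<le> j" "j \<le> l" for i j
  proof (cases "i = j \<or> j = l")
    case True
    with that l le_max show ?thesis by auto
  next
    case False
    with that l have "min (S i) (S l) \<le> S j" by (intro no_valley) auto
    with that l le_max show ?thesis by (simp add: min_absorb1)
  qed
  moreover have "S j \<le> S i" if "l \<le> i" "i \<le> j" "j \<le> p" for i j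
  proof (cases "i = j \<or> i = l")
    case True
    with that l le_max show ?thesis by auto
  next
    case False
    with that l have "min (S l) (S j) \<le> S i" by (intro no_valley) auto
    with that l le_max show ?thesis by (simp add: min_absorb2)
  qed
  ultimately show ?thesis using l by blast
qed

lemma unit_descent_crosses_level:
  fixes f :: "nat \<Rightarrow> nat"
  assumes "k1 \<le> k2" "f k2 \<le> v" "v < f k1"
    and unit_steps: "\<And>k. k1 \<le> k \<Longrightarrow> k < k2 \<Longrightarrow> f (Suc k) \<le> f k \<and> f k \<le> Suc (f (Suc k))"
  shows "\<exists>q. k1 \<le> q \<and> q < k2 \<and> f q = Suc v \<and> f (Suc q) = v"
  using assms
proof (induction k2 rule: dec_induct)
  case base
  then show ?case by simp
next
  case (step k2)
  show ?case
  proof (cases "f k2 \<le> v")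
    case True
    with step show ?thesis by (metis less_SucI)
  next
    case False
    with step.prems step.hyps have "f k2 = Suc v \<and> f (Suc k2) = v" by fastforce
    with step.hyps show ?thesis by blast
  qed
qed

lemma resid_take_Suc:
  "k < length xs \<Longrightarrow>
   resid lv s (take (Suc k) xs) t = resid lv s (take k xs) t - (if s (xs ! k) = t then 1 else 0)"
  by (simp add: resid_def take_Suc_conv_app_nth)

lemma resid_take_antimono:
  "k1 \<le> k2 \<Longrightarrow> resid lv s (take k2 xs) t \<le> resid lv s (take k1 xs) t"
  by (auto simp: resid_def take_add dest!: le_Suc_ex)

lemma accessible_resid_bounds:
  assumes "accessible m s TH d b" "1 \<le> u" "u \<le> s b"
  shows "TH b \<le> d u" "d u \<le> Suc (TH b)"
  using assms by (cases "u = s b"; auto simp: accessible_def)+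

lemma cycle_retrieves_intermediate_height:
  assumes acc: "\<forall>i<length bs. accessible m s TH (resid lv s (take i bs)) (bs ! i)"
    and "a \<in> set bs" "e \<in> set bs" "1 \<le> u" "u \<le> s a" "u \<le> s e"
    and "TH a < h" "h < TH e"
  shows "\<exists>b\<in>set bs. s b = u \<and> TH b = h"
proof -
  define d where "d k = resid lv s (take k bs) u" for k
  obtain ka ke where ka: "ka < length bs" "bs ! ka = a" and ke: "ke < length bs" "bs ! ke = e"
    using \<open>a \<in> set bs\<close> \<open>e \<in> set bs\<close> by (metis in_set_conv_nth)
  have "d ka \<le> h" "h < d ke"
    using accessible_resid_bounds[OF acc[rule_format, OF ka(1)]]
      accessible_resid_bounds[OF acc[rule_format, OF ke(1)]] assms ka ke
    unfolding d_def by fastforce+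
  then have "ke < ka"
    using resid_take_antimono[of ka ke] unfolding d_def by (meson leD leI order_trans)
  have steps: "d (Suc k) \<le> d k \<and> d k \<le> Suc (d (Suc k))" if "k < length bs" for k
    using resid_take_Suc[OF that] unfolding d_def by simp linarith
  obtain q where q: "ke \<le> q" "q < ka" "d q = Suc h" "d (Suc q) = h"
    using unit_descent_crosses_level[of ke ka d h] \<open>ke < ka\<close> \<open>d ka \<le> h\<close> \<open>h < d ke\<close> ka(1) steps
    by auto
  with ka(1) have q_len: "q < length bs" by simp
  with q have "s (bs ! q) = u"
    using resid_take_Suc[OF q_len, of lv s u] unfolding d_def by (auto split: if_splits)
  moreover have "TH (bs ! q) = h"
    using acc[rule_format, OF q_len] q(3) \<open>s (bs ! q) = u\<close> by (simp add: accessible_def d_def)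
  ultimately show ?thesis using q_len by auto
qed

lemma max_stack_per_height_no_valley:
  fixes TH :: "'b \<Rightarrow> 'h::linorder" and s :: "'b \<Rightarrow> 'a::linorder"
  assumes "finite Y"
    and intermediate: "\<And>a e h. a \<in> Y \<Longrightarrow> e \<in> Y \<Longrightarrow> TH a < h \<Longrightarrow> h < TH e \<Longrightarrow>
                               \<exists>b\<in>Y. TH b = h \<and> min (s a) (s e) \<le> s b"
    and hs: "hs = sorted_list_of_set (TH ` Y)"
    and S: "S = (\<lambda>i. Max {s b | b. b \<in> Y \<and> TH b = hs ! (i - 1)})"
    and "1 \<le> i" "i < j" "j < k" "k \<le> length hs"
  shows "min (S i) (S k) \<le> S j"
proof -
  have fin: "finite {s b | b. b \<in> Y \<and> TH b = x}" for x
    using \<open>finite Y\<close> by simp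
  have attained: "\<exists>b\<in>Y. TH b = hs ! (n - 1) \<and> s b = S n" if "1 \<le> n" "n \<le> length hs" for n
  proof -
    have "hs ! (n - 1) \<in> set hs"
      using that by simp
    then have "hs ! (n - 1) \<in> TH ` Y"
      using hs \<open>finite Y\<close> by simp
    then have "{s b | b. b \<in> Y \<and> TH b = hs ! (n - 1)} \<noteq> {}" by auto
    from Max_in[OF fin this] show ?thesis unfolding S by auto
  qed
  obtain a where a: "a \<in> Y" "TH a = hs ! (i - 1)" "s a = S i"
    using attained[of i] assms by auto
  obtain e where e: "e \<in> Y" "TH e = hs ! (k - 1)" "s e = S k"
    using attained[of k] assms by auto
  have "sorted_wrt (<) hs" using hs by simp
  then have "TH a < hs ! (j - 1)" "hs ! (j - 1) < TH e"
    using a e assms by (auto simp: sorted_wrt_nth_less)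
  then obtain b where "b \<in> Y" "TH b = hs ! (j - 1)" "min (S i) (S k) \<le> s b"
    using intermediate[OF a(1) e(1)] a e by metis
  then show ?thesis
    unfolding S by (auto intro: order_trans Max_ge[OF fin])
qed

theorem lemma3:
  fixes m :: nat and h0 :: "nat \<Rightarrow> nat" and B :: "'b set"
    and s hb :: "'b \<Rightarrow> nat" and cs :: "'b cycle list" and c :: nat
  assumes "valid_instance m h0 B s hb"
    and "feasible m h0 B s hb cs"
    and "c < length cs"
    and "Y = set (snd (cs ! c))"
    and "Y \<noteq> {}"
    and "TH = fst (snd (state_at h0 hb s cs c))"
    and "hs = sorted_list_of_set (TH ` Y)"
    and "p = length hs"
    and "S = (\<lambda>i. Max {s b | b. b \<in> Y \<and> TH b = hs ! (i - 1)})"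
  shows "\<exists>l\<in>{1..p}. (\<forall>i j. 1 \<le> i \<and> i \<le> j \<and> j \<le> l \<longrightarrow> S i \<le> S j) \<and>
                   (\<forall>i j. l \<le> i \<and> i \<le> j \<and> j \<le> p \<longrightarrow> S j \<le> S i)"
proof (rule unimodal_if_no_valley)
  obtain lv bs where cycle: "cs ! c = (lv, bs)" by fastforce
  obtain H R where state: "state_at h0 hb s cs c = (H, TH, R)"
    using assms(6) by (metis prod.collapse)
  have "cycle_ok m B s (state_at h0 hb s cs c) (cs ! c)"
    using assms(2,3) by (simp add: feasible_def)
  then have acc: "\<forall>i<length bs. accessible m s TH (resid lv s (take i bs)) (bs ! i)"
    and "Y \<subseteq> B"
    using assms(4) by (auto simp: cycle_ok_def state cycle)
  then have "\<forall>b\<in>Y. 1 \<le> s b"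
    using assms(1) by (auto simp: valid_instance_def)
  then have "\<exists>b\<in>Y. TH b = h \<and> min (s a) (s e) \<le> s b"
    if "a \<in> Y" "e \<in> Y" "TH a < h" "h < TH e" for a e h
    using cycle_retrieves_intermediate_height[OF acc, of a e "min (s a) (s e)" h] that assms(4) cycle
    by auto
  then show "min (S i) (S k) \<le> S j" if "1 \<le> i" "i < j" "j < k" "k \<le> p" for i j k
    using max_stack_per_height_no_valley[OF _ _ assms(7,9)] that assms(4,8) by auto
  show "1 \<le> p"
    using assms(4,5,7,8) by (simp add: Suc_le_eq card_gt_0_iff)
qed

end
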